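(* Let $P$ and $Q$ be autarkic tuples. Then $P\subseteq Q$, or $Q\subseteq P$, or $P\cap Q=\emptyset$.
   Context: Steiner Forest: finite undirected graph $G=(V,E)$, non-negative edge costs $(c_e)_{e\in E}$, set $\mathcal{D}$ of demand pairs $\{a,b\}\subseteq V$ (partners). For $U\subseteq V$, $\delta(U)$ is the set of edges with exactly one endpoint in $U$; $U$ separates $S$ if $S\cap U\ne\emptyset$ and $S\setminus U\ne\emptyset$; $\mathrm{sep}(U)$ is the set of demand pairs separated by $U$. The $\varepsilon$-extended moat-growing algorithm (fixed $\varepsilon\ge0$): time $t$ increases continuously from $0$ at unit rate; it maintains tight edges $F$ (initially empty), duals $y_S(t)\ge0$ (initially $0$), and budgets of components (initially $0$). $\mathcal{C}^t$ is the family of vertex sets of connected components of $(V,F)$. A component is demand-active if it contains a vertex not connected in $(V,F)$ to some partner; budget-active if not demand-active but with positive budget; active if either; $\mathcal{A}^t$ is the set of active components. Each $y_S$, $S\in\mathcal{A}^t$, grows at unit rate; budgets of demand-active components grow at rate $\varepsilon$ and of budget-active ones decrease at rate $1$; an edge $e$ with $\sum_{S:e\in\delta(S)}y_S(t)=c_e$ becomes tight and is added to $F$; merging components add budgets. $y_S=y_S(\infty)$. Autarkic pair: $\{A,B\}$ with $A,B\in\mathrm{supp}(y)$ disjoint, both in $\mathcal{A}^t$ for some $t$, $\mathrm{sep}(A)=\mathrm{sep}(B)\ne\emptyset$. Autarkic triple: $\{A_1,A_2,A_3\}$ pairwise disjoint, all in $\mathcal{A}^t$ for some $t$, each $\mathrm{sep}(A_i)\ne\emptyset$,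 $\mathrm{sep}(A_1\cup A_2\cup A_3)=\emptyset$. Autarkic tuples are autarkic pairs and triples. For autarkic tuples $P$ (with sets $A_i$) and $Q$ (with sets $B_j$), $P\subseteq Q$ means every $A_i$ is contained in some $B_j$, and $P\cap Q=\emptyset$ means $A_i\cap B_j=\emptyset$ for all $i,j$. *)

theory Defs
  imports Complex_Main
begin

text \<open>State of the epsilon-extended moat-growing algorithm at an event time:
  current time, tight edges F, duals y, budgets b.\<close>
record ('v, 'e) mstate =
  mtime :: real
  mF :: "'e set"
  my :: "'v set \<Rightarrow> real"
  mb :: "'v set \<Rightarrow> real"

text \<open>Instance: vertices V, edges E (multigraph; endp e = the two endpoints of e),
  costs c, demand pairs D, parameter eps.\<close>
locale moat =
  fixes V :: "'v set" and E :: "'e set" and endp :: "'e \<Rightarrow> 'v \<times> 'v"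
    and c :: "'e \<Rightarrow> real" and D :: "'v set set" and eps :: real
begin

definition delta :: "'v set \<Rightarrow> 'e set" where
  "delta U = {e \<in> E. (fst (endp e) \<in> U) \<noteq> (snd (endp e) \<in> U)}"

definition separates :: "'v set \<Rightarrow> 'v set \<Rightarrow> bool" where
  "separates U S \<longleftrightarrow> S \<inter> U \<noteq> {} \<and> S - U \<noteq> {}"

definition sep :: "'v set \<Rightarrow> 'v set set" where
  "sep U = {S \<in> D. separates U S}"

definition edge_rel :: "'e set \<Rightarrow> ('v \<times> 'v) set" where
  "edge_rel F = {(fst (endp e), snd (endp e)) | e. e \<in> F}
              \<union> {(snd (endp e), fst (endp e)) | e. e \<in> F}"

definition conn :: "'e set \<Rightarrow> 'v \<Rightarrow> 'v \<Rightarrow> bool" where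
  "conn F u v \<longleftrightarrow> (u, v) \<in> (edge_rel F)\<^sup>*"

definition comps :: "'e set \<Rightarrow> 'v set set" where
  "comps F = {{w \<in> V. conn F v w} | v. v \<in> V}"

definition demand_active :: "'e set \<Rightarrow> 'v set \<Rightarrow> bool" where
  "demand_active F S \<longleftrightarrow> (\<exists>v\<in>S. \<exists>p\<in>D. v \<in> p \<and> (\<exists>w\<in>p. \<not> conn F v w))"

definition budget_active :: "'e set \<Rightarrow> ('v set \<Rightarrow> real) \<Rightarrow> 'v set \<Rightarrow> bool" where
  "budget_active F b S \<longleftrightarrow> \<not> demand_active F S \<and> b S > 0"

definition actives :: "'e set \<Rightarrow> ('v set \<Rightarrow> real) \<Rightarrow> 'v set set" where
  "actives F b = {S \<in> comps F. demand_active F S \<or> budget_active F b S}"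

definition load :: "('v set \<Rightarrow> real) \<Rightarrow> 'e \<Rightarrow> real" where
  "load y e = (\<Sum>S\<in>{S. S \<subseteq> V \<and> e \<in> delta S}. y S)"

text \<open>rate at which the load of edge e grows\<close>
definition erate :: "'e set \<Rightarrow> ('v set \<Rightarrow> real) \<Rightarrow> 'e \<Rightarrow> nat" where
  "erate F b e = card {S \<in> actives F b. e \<in> delta S}"

text \<open>candidate lengths until the next event (edge becoming tight, budget running out)\<close>
definition cand :: "('v, 'e) mstate \<Rightarrow> real set" where
  "cand st =
     {(c e - load (my st) e) / real (erate (mF st) (mb st) e) | e.
        e \<in> E \<and> e \<notin> mF st \<and> erate (mF st) (mb st) e > 0}
   \<union> {mb st S | S. S \<in> actives (mF st) (mb st) \<and> budget_active (mF st) (mb st) S}"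

definition step :: "('v, 'e) mstate \<Rightarrow> ('v, 'e) mstate" where
  "step st =
    (if cand st = {} then st else
     (let F = mF st; b = mb st; A = actives F b; d = Min (cand st);
          y' = (\<lambda>S. my st S + (if S \<in> A then d else 0));
          b1 = (\<lambda>S. if S \<in> A then (if demand_active F S then b S + eps * d else b S - d)
                    else b S);
          F' = F \<union> {e \<in> E. load y' e = c e};
          b' = (\<lambda>S'. if S' \<in> comps F' then (\<Sum>S\<in>{S \<in> comps F. S \<subseteq> S'}. b1 S) else b1 S')
      in \<lparr>mtime = mtime st + d, mF = F', my = y', mb = b'\<rparr>))"

definition init :: "('v, 'e) mstate" where
  "init = \<lparr>mtime = 0, mF = {e \<in> E. c e = 0}, my = (\<lambda>_. 0), mb = (\<lambda>_. 0)\<rparr>"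

definition run :: "nat \<Rightarrow> ('v, 'e) mstate" where
  "run k = (step ^^ k) init"

definition active_at :: "real \<Rightarrow> 'v set set" where
  "active_at t = {S. \<exists>k. mtime (run k) \<le> t
       \<and> (t < mtime (run (Suc k)) \<or> run (Suc k) = run k)
       \<and> S \<in> actives (mF (run k)) (mb (run k))}"

definition yinf :: "'v set \<Rightarrow> real" where
  "yinf S = lim (\<lambda>k. my (run k) S)"

definition supp :: "'v set set" where
  "supp = {S. yinf S \<noteq> 0}"

definition autarkic_pair :: "'v set set \<Rightarrow> bool" where
  "autarkic_pair T \<longleftrightarrow> (\<exists>A B. T = {A, B} \<and> A \<in> supp \<and> B \<in> supp \<and> A \<inter> B = {}
      \<and> (\<exists>t. A \<in> active_at t \<and> B \<in> active_at t) \<and> sep A = sep B \<and> sep A \<noteq> {})"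

definition autarkic_triple :: "'v set set \<Rightarrow> bool" where
  "autarkic_triple T \<longleftrightarrow> (\<exists>A1 A2 A3. T = {A1, A2, A3}
      \<and> A1 \<inter> A2 = {} \<and> A1 \<inter> A3 = {} \<and> A2 \<inter> A3 = {}
      \<and> (\<exists>t. A1 \<in> active_at t \<and> A2 \<in> active_at t \<and> A3 \<in> active_at t)
      \<and> sep A1 \<noteq> {} \<and> sep A2 \<noteq> {} \<and> sep A3 \<noteq> {}
      \<and> sep (A1 \<union> A2 \<union> A3) = {})"

definition autarkic :: "'v set set \<Rightarrow> bool" where
  "autarkic T \<longleftrightarrow> autarkic_pair T \<or> autarkic_triple T"

end

definition tuple_sub :: "'v set set \<Rightarrow> 'v set set \<Rightarrow> bool" where
  "tuple_sub P Q \<longleftrightarrow> (\<forall>A\<in>P. \<exists>B\<in>Q. A \<subseteq> B)"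

definition tuple_disj :: "'v set set \<Rightarrow> 'v set set \<Rightarrow> bool" where
  "tuple_disj P Q \<longleftrightarrow> (\<forall>A\<in>P. \<forall>B\<in>Q. A \<inter> B = {})"

end

theory Submission
  imports Defs
begin

(* Tight edges are only ever added, so components taken at different times form a laminar
   family; and since the duals stay feasible, event times never decrease, so all sets active
   at one time t are components of one and the same edge set.  Take P at step kP and Q at a
   later step kQ: every member of P then lies inside the union of Q or is disjoint from it.
   Neither union separates a demand pair (for an autarkic pair because demands have two
   elements), hence neither do the union of the members of P inside the union of Q and the
   union of those outside it.  P has at most three members, each separating some pair, so one
   of these two groups must be empty. *)

context moat
begin

lemma sep_Compl: "sep (- U) = sep U"
  by (auto simp: sep_def separates_def)

lemma sep_Int_subset: "sep (U \<inter> W) \<subseteq> sep U \<union> sep W"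
  by (auto simp: sep_def separates_def)

lemma sep_Int_eq_empty: "sep U = {} \<Longrightarrow> sep W = {} \<Longrightarrow> sep (U \<inter> W) = {}"
  using sep_Int_subset by blast

lemma sep_Diff_eq_empty: "sep W = {} \<Longrightarrow> sep U = {} \<Longrightarrow> sep (W - U) = {}"
  by (simp add: Diff_eq sep_Int_eq_empty sep_Compl)

lemma sep_empty: "sep {} = {}"
  by (auto simp: sep_def separates_def)

(* The properties of an autarkic tuple that the argument uses, apart from its time. *)
definition autarkic_shape :: "'v set set \<Rightarrow> bool" where
  "autarkic_shape T \<longleftrightarrow> finite T \<and> card T \<le> 3 \<and> (\<forall>A\<in>T. sep A \<noteq> {}) \<and> sep (\<Union>T) = {}"

lemma autarkic_shape_split:
  assumes T: "autarkic_shape T" and U: "sep U = {}"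
    and split: "\<forall>A\<in>T. A \<subseteq> U \<or> A \<inter> U = {}"
  shows "(\<forall>A\<in>T. A \<subseteq> U) \<or> (\<forall>A\<in>T. A \<inter> U = {})"
proof (rule ccontr)
  assume mixed: "\<not> ?thesis"
  define X where "X = {A \<in> T. A \<subseteq> U}"
  define Y where "Y = T - X"
  have fin: "finite T" and card_T: "card T \<le> 3" and sep_T: "sep (\<Union>T) = {}"
    and sep_members: "\<forall>A\<in>T. sep A \<noteq> {}"
    using T by (auto simp: autarkic_shape_def)
  have "X \<noteq> {}" "Y \<noteq> {}" "X \<subseteq> T"
    using mixed split by (auto simp: X_def Y_def)
  moreover have "finite X" "finite Y"
    using fin by (auto simp: X_def Y_def)
  ultimately have "card X \<ge> 1" "card Y \<ge> 1" "card T = card X + card Y"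
    by (auto simp: Y_def Suc_le_eq card_gt_0_iff card_Un_disjoint[symmetric] Un_absorb1)
  then have "card X = 1 \<or> card Y = 1"
    using card_T by linarith
  moreover have "sep (\<Union>X) = {}"
  proof -
    have "\<Union>X = \<Union>T \<inter> U" using split by (auto simp: X_def)
    then show ?thesis using sep_Int_eq_empty[OF sep_T U] by simp
  qed
  moreover have "sep (\<Union>Y) = {}"
  proof -
    have "\<Union>Y = \<Union>T - U" using split by (auto simp: X_def Y_def)
    then show ?thesis using sep_Diff_eq_empty[OF sep_T U] by simp
  qed
  moreover have "Y \<subseteq> T" by (simp add: Y_def)
  ultimately obtain A where "A \<in> T" "sep A = {}"
    using \<open>X \<subseteq> T\<close> by (auto simp: card_1_singleton_iff)
  then show False using sep_members by auto
qed

lemma conn_sym: "conn F u v \<Longrightarrow> conn F v u"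
proof -
  have "sym (edge_rel F)" unfolding sym_def edge_rel_def by blast
  then show "conn F u v \<Longrightarrow> conn F v u"
    unfolding conn_def by (meson sym_rtrancl symD)
qed

lemma conn_trans: "conn F u v \<Longrightarrow> conn F v w \<Longrightarrow> conn F u w"
  unfolding conn_def by simp

lemma conn_mono: "F \<subseteq> F' \<Longrightarrow> conn F u v \<Longrightarrow> conn F' u v"
proof -
  assume "F \<subseteq> F'"
  then have "edge_rel F \<subseteq> edge_rel F'" by (auto simp: edge_rel_def)
  then show "conn F u v \<Longrightarrow> conn F' u v"
    unfolding conn_def using rtrancl_mono by blast
qed

lemma comps_laminar:
  assumes "F \<subseteq> F'" "A \<in> comps F" "B \<in> comps F'" "A \<inter> B \<noteq> {}"
  shows "A \<subseteq> B"
proof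
  obtain u where A: "A = {w \<in> V. conn F u w}" using assms(2) by (auto simp: comps_def)
  obtain u' where B: "B = {w \<in> V. conn F' u' w}" using assms(3) by (auto simp: comps_def)
  obtain x where x: "x \<in> A" "x \<in> B" using assms(4) by auto
  fix w assume "w \<in> A"
  then have "conn F x w" "w \<in> V" using x(1) A conn_sym conn_trans by blast+
  then have "conn F' u' w"
    using conn_mono[OF assms(1)] x(2) B conn_trans by blast
  then show "w \<in> B" using B \<open>w \<in> V\<close> by simp
qed

lemma autarkic_shape_nested_or_disjoint:
  assumes P: "autarkic_shape P" and sep_Q: "sep (\<Union>Q) = {}"
    and "P \<subseteq> comps F" "Q \<subseteq> comps F'" "F \<subseteq> F'"
  shows "tuple_sub P Q \<or> tuple_disj P Q"
proof -
  have nested: "A \<subseteq> B" if "A \<in> P" "B \<in> Q" "A \<inter> B \<noteq> {}" for A B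
    using comps_laminar assms(3-5) that by blast
  have "\<forall>A\<in>P. A \<subseteq> \<Union>Q \<or> A \<inter> \<Union>Q = {}"
  proof
    fix A assume "A \<in> P"
    show "A \<subseteq> \<Union>Q \<or> A \<inter> \<Union>Q = {}"
    proof (cases "A \<inter> \<Union>Q = {}")
      case False
      then obtain B where "B \<in> Q" "A \<inter> B \<noteq> {}" by blast
      then have "A \<subseteq> B" by (rule nested[OF \<open>A \<in> P\<close>])
      with \<open>B \<in> Q\<close> show ?thesis by blast
    qed simp
  qed
  then consider "\<forall>A\<in>P. A \<subseteq> \<Union>Q" | "\<forall>A\<in>P. A \<inter> \<Union>Q = {}"
    using autarkic_shape_split[OF P sep_Q] by blast
  then show ?thesis
  proof cases
    case 1
    have "\<exists>B\<in>Q. A \<subseteq> B" if A: "A \<in> P" for A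
    proof -
      have "A \<noteq> {}"
        using P A sep_empty by (auto simp: autarkic_shape_def)
      then obtain x where "x \<in> A" by blast
      then obtain B where "B \<in> Q" "x \<in> B" using 1 A by blast
      moreover from \<open>x \<in> A\<close> \<open>x \<in> B\<close> have "A \<inter> B \<noteq> {}" by blast
      ultimately have "A \<subseteq> B" using nested[OF that] by simp
      with \<open>B \<in> Q\<close> show ?thesis ..
    qed
    then show ?thesis by (simp add: tuple_sub_def)
  next
    case 2
    then show ?thesis by (auto simp: tuple_disj_def)
  qed
qed

end

locale moat_instance = moat V E endp c D eps
  for V :: "'v set" and E :: "'e set" and endp c D eps +
  assumes finite_V: "finite V" and finite_E: "finite E"
    and costs_nonneg: "\<forall>e\<in>E. c e \<ge> 0"
    and demand_card: "\<forall>p\<in>D. card p = 2"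
begin

lemma sep_Un_eq_empty:
  assumes disj: "A \<inter> B = {}" and same: "sep A = sep B"
  shows "sep (A \<union> B) = {}"
proof (rule ccontr)
  assume "sep (A \<union> B) \<noteq> {}"
  then obtain p x where p: "p \<in> D" "p \<inter> (A \<union> B) \<noteq> {}" and x: "x \<in> p" "x \<notin> A" "x \<notin> B"
    by (auto simp: sep_def separates_def)
  then have "p \<in> sep A \<or> p \<in> sep B"
    by (auto simp: sep_def separates_def)
  then have "p \<in> sep A" "p \<in> sep B"
    using same by auto
  then obtain a b where "a \<in> p" "a \<in> A" "b \<in> p" "b \<in> B"
    by (auto simp: sep_def separates_def)
  have "a \<noteq> b" "a \<noteq> x" "b \<noteq> x"
    using disj x \<open>a \<in> A\<close> \<open>b \<in> B\<close> by auto
  then have "card {a, b, x} = 3" by simp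
  moreover have "card {a, b, x} \<le> card p"
    using \<open>a \<in> p\<close> \<open>b \<in> p\<close> x demand_card p(1) by (intro card_mono) (auto intro: card_ge_0_finite)
  ultimately show False
    using demand_card p(1) by simp
qed

lemma step_stalls: "cand st = {} \<Longrightarrow> step st = st"
  by (simp add: step_def)

lemma step_moves:
  assumes "cand st \<noteq> {}"
  shows "my (step st) = (\<lambda>S. my st S + (if S \<in> actives (mF st) (mb st) then Min (cand st) else 0))"
    and "mF (step st) = mF st \<union> {e \<in> E. load (my (step st)) e = c e}"
    and "mtime (step st) = mtime st + Min (cand st)"
  using assms by (simp_all add: step_def Let_def)

lemma run_Suc: "run (Suc k) = step (run k)"
  by (simp add: run_def)

lemma finite_comps: "finite (comps F)"
  using finite_V by (auto simp: comps_def intro: finite_image_set)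

lemma actives_subset_Pow: "actives F b \<subseteq> Pow V"
  by (auto simp: actives_def comps_def)

lemma finite_cand: "finite (cand st)"
proof -
  have "finite (actives (mF st) (mb st))"
    using finite_comps by (auto simp: actives_def)
  then show ?thesis
    using finite_E by (auto simp: cand_def intro: finite_image_set)
qed

lemma load_shift:
  assumes "A \<subseteq> Pow V"
  shows "load (\<lambda>S. y S + (if S \<in> A then d else 0)) e
    = load y e + d * real (card {S \<in> A. e \<in> delta S})"
proof -
  let ?M = "{S. S \<subseteq> V \<and> e \<in> delta S}"
  have "finite ?M" using finite_V by (auto intro: finite_subset[of _ "Pow V"])
  then have "(\<Sum>S\<in>?M. if S \<in> A then d else 0) = d * real (card (?M \<inter> A))"
    by (simp add: sum.inter_restrict[symmetric])
  also have "?M \<inter> A = {S \<in> A. e \<in> delta S}" using assms by auto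
  finally show ?thesis by (simp add: load_def sum.distrib)
qed

definition dual_feasible :: "('v, 'e) mstate \<Rightarrow> bool" where
  "dual_feasible st \<longleftrightarrow> (\<forall>e\<in>E - mF st. load (my st) e \<le> c e)"

lemma Min_cand_nonneg:
  assumes "dual_feasible st" "cand st \<noteq> {}"
  shows "Min (cand st) \<ge> 0"
proof -
  have "x \<ge> 0" if "x \<in> cand st" for x
    using assms(1) that by (auto simp: cand_def dual_feasible_def budget_active_def)
  then show ?thesis using Min_in[OF finite_cand assms(2)] by blast
qed

lemma dual_feasible_step:
  assumes feasible: "dual_feasible st"
  shows "dual_feasible (step st)"
proof (cases "cand st = {}")
  case True
  then show ?thesis using feasible by (simp add: step_stalls)
next
  case False
  let ?d = "Min (cand st)" and ?r = "\<lambda>e. erate (mF st) (mb st) e"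
  show ?thesis unfolding dual_feasible_def
  proof
    fix e assume e: "e \<in> E - mF (step st)"
    then have "e \<in> E - mF st" using step_moves(2)[OF False] by blast
    then have old: "load (my st) e \<le> c e" using feasible by (simp add: dual_feasible_def)
    have new: "load (my (step st)) e = load (my st) e + ?d * real (?r e)"
      unfolding step_moves(1)[OF False] erate_def by (rule load_shift[OF actives_subset_Pow])
    show "load (my (step st)) e \<le> c e"
    proof (cases "?r e = 0")
      case False
      then have "(c e - load (my st) e) / real (?r e) \<in> cand st"
        using \<open>e \<in> E - mF st\<close> by (auto simp: cand_def)
      then have "?d \<le> (c e - load (my st) e) / real (?r e)"
        using finite_cand by simp
      then show ?thesis using new False by (simp add: pos_le_divide_eq)
    qed (use new old in simp)
  qed
qed

lemma dual_feasible_run: "dual_feasible (run k)"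
proof (induction k)
  case 0
  show ?case using costs_nonneg by (auto simp: dual_feasible_def run_def init_def load_def)
next
  case (Suc k)
  then show ?case by (simp add: run_Suc dual_feasible_step)
qed

lemma mtime_run_mono: "k \<le> k' \<Longrightarrow> mtime (run k) \<le> mtime (run k')"
proof (rule lift_Suc_mono_le)
  show "mtime (run n) \<le> mtime (run (Suc n))" for n
    using Min_cand_nonneg[OF dual_feasible_run]
    by (cases "cand (run n) = {}") (simp_all add: run_Suc step_stalls step_moves)
qed

lemma mF_run_mono: "k \<le> k' \<Longrightarrow> mF (run k) \<subseteq> mF (run k')"
proof (rule lift_Suc_mono_le)
  show "mF (run n) \<subseteq> mF (run (Suc n))" for n
    by (cases "cand (run n) = {}") (auto simp: run_Suc step_stalls step_moves)
qed

lemma run_stalled: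
  assumes "run (Suc k) = run k"
  shows "k \<le> k' \<Longrightarrow> run k' = run k"
proof (induction k' rule: dec_induct)
  case (step n)
  then show ?case using assms by (simp add: run_Suc)
qed simp

lemma run_eq_if_started:
  assumes phase: "mtime (run k) \<le> t" "t < mtime (run (Suc k)) \<or> run (Suc k) = run k"
    and started: "mtime (run k') \<le> t" and "k \<le> k'"
  shows "run k' = run k"
proof (cases "run (Suc k) = run k")
  case True
  then show ?thesis using run_stalled \<open>k \<le> k'\<close> by blast
next
  case False
  have "\<not> Suc k \<le> k'"
    using mtime_run_mono[of "Suc k" k'] started phase(2) False by linarith
  with \<open>k \<le> k'\<close> have "k' = k" by simp
  then show ?thesis by simp
qed

lemma active_at_subset_comps: "\<exists>k. active_at t \<subseteq> comps (mF (run k))"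
proof (cases "active_at t = {}")
  case False
  have phase: "\<exists>k. mtime (run k) \<le> t \<and> (t < mtime (run (Suc k)) \<or> run (Suc k) = run k)
      \<and> S \<in> comps (mF (run k))" if "S \<in> active_at t" for S
    using that by (auto simp: active_at_def actives_def)
  obtain k0 where k0: "mtime (run k0) \<le> t" "t < mtime (run (Suc k0)) \<or> run (Suc k0) = run k0"
    using False phase by blast
  have "S \<in> comps (mF (run k0))" if active: "S \<in> active_at t" for S
  proof -
    obtain k where k: "mtime (run k) \<le> t" "t < mtime (run (Suc k)) \<or> run (Suc k) = run k"
      and S: "S \<in> comps (mF (run k))"
      using phase[OF active] by blast
    have "run k = run k0"
      using run_eq_if_started[OF k k0(1)] run_eq_if_started[OF k0 k(1)] by (cases "k \<le> k0") auto
    then show ?thesis using S by simp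
  qed
  then show ?thesis by blast
qed simp

lemma autarkic_subset_active_at: "autarkic T \<Longrightarrow> \<exists>t. T \<subseteq> active_at t"
  by (auto simp: autarkic_def autarkic_pair_def autarkic_triple_def)

lemma autarkic_imp_autarkic_shape:
  assumes "autarkic T"
  shows "autarkic_shape T"
  using assms unfolding autarkic_def
proof
  assume "autarkic_pair T"
  then obtain A B where "T = {A, B}" "A \<inter> B = {}" "sep A = sep B" "sep A \<noteq> {}"
    unfolding autarkic_pair_def by blast
  then show ?thesis
    using sep_Un_eq_empty by (auto simp: autarkic_shape_def card_insert_if)
next
  assume "autarkic_triple T"
  then obtain A1 A2 A3 where "T = {A1, A2, A3}" "sep (A1 \<union> A2 \<union> A3) = {}"
      "sep A1 \<noteq> {}" "sep A2 \<noteq> {}" "sep A3 \<noteq> {}"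
    unfolding autarkic_triple_def by blast
  moreover have "card {A1, A2, A3} \<le> 3"
    using card_insert_le[of "{A2, A3}" A1] by (simp add: card_insert_if)
  ultimately show ?thesis
    by (auto simp: autarkic_shape_def Un_assoc)
qed

theorem autarkic_nested_or_disjoint:
  assumes "autarkic P" "autarkic Q"
  shows "tuple_sub P Q \<or> tuple_sub Q P \<or> tuple_disj P Q"
proof -
  obtain kP kQ where P: "P \<subseteq> comps (mF (run kP))" and Q: "Q \<subseteq> comps (mF (run kQ))"
    using assms autarkic_subset_active_at active_at_subset_comps by (meson order_trans)
  have shape: "autarkic_shape P" "autarkic_shape Q"
    using assms autarkic_imp_autarkic_shape by auto
  then have sep_union: "sep (\<Union>P) = {}" "sep (\<Union>Q) = {}"
    by (simp_all add: autarkic_shape_def)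
  show ?thesis
  proof (cases "kP \<le> kQ")
    case True
    then show ?thesis
      using autarkic_shape_nested_or_disjoint[OF shape(1) sep_union(2) P Q mF_run_mono] by blast
  next
    case False
    then have "tuple_sub Q P \<or> tuple_disj Q P"
      using autarkic_shape_nested_or_disjoint[OF shape(2) sep_union(1) Q P mF_run_mono] by simp
    then show ?thesis by (auto simp: tuple_disj_def)
  qed
qed

end

theorem lemma4p10:
  fixes V :: "'v set" and E :: "'e set" and endp :: "'e \<Rightarrow> 'v \<times> 'v"
    and c :: "'e \<Rightarrow> real" and D :: "'v set set" and eps :: real
    and P Q :: "'v set set"
  assumes "finite V" and "finite E"
    and "\<forall>e\<in>E. fst (endp e) \<in> V \<and> snd (endp e) \<in> V"
    and "\<forall>e\<in>E. c e \<ge> 0"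
    and "\<forall>p\<in>D. p \<subseteq> V \<and> card p = 2"
    and "eps \<ge> 0"
    and "\<forall>p\<in>D. \<forall>u\<in>p. \<forall>w\<in>p. moat.conn endp E u w"
    and "moat.autarkic V E endp c D eps P"
    and "moat.autarkic V E endp c D eps Q"
  shows "tuple_sub P Q \<or> tuple_sub Q P \<or> tuple_disj P Q"
proof -
  interpret moat_instance V E endp c D eps
    using assms(1,2,4,5) by unfold_locales auto
  show ?thesis using autarkic_nested_or_disjoint assms(8,9) .
qed

end
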